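(* Let $G$ be a countable group, $\preceq$ a left-invariant total order on $G$, and $x\in G$ a central element which is dominant for $\preceq$. Let $(\phi,t)$ be a dynamical realization of $\preceq$ adapted to $x$. Then $T_{(G,\preceq,\rho_x)}=T_{\mathbb{R}}\circ\phi$.
   Context: $x$ is dominant for $\preceq$ if right multiplication $\rho_x(g)=gx$ is dominant: for all $a,b\in G$ there is $n\in\mathbb{N}$ with $ax^n\succ b$. $T_{(G,\preceq,\rho_x)}(g):=\lim_{n\to\infty}\frac1n h_T(g^n,e)$, where $h_T(a,b)=\inf\{m\in\mathbb{Z}: bx^m\succeq a\}$. A dynamical realization of $\preceq$ is a pair $(\phi,t)$ of an injective homomorphism $\phi:G\to{\rm Homeo}^+(\mathbb{R})$ and an injective map $t:G\to\mathbb{R}$ with $t(gh)=\phi(g)(t(h))$, $t(e)=0$, $\inf_g t(g)=-\infty$, $\sup_g t(g)=\infty$, and $f\prec g\Leftrightarrow \phi(f)(0)<\phi(g)(0)$. It is adapted to $x$ if $\phi(x)$ is the translation $s\mapsto s+1$; then $\phi(G)\subset{\rm Homeo}^+_{\mathbb{Z}}(\mathbb{R})$ (homeomorphisms commuting with $s\mapsto s+1$). $T_{\mathbb{R}}(\psi)=\lim_n\psi^n(0)/n$ is the translation number on ${\rm Homeo}^+_{\mathbb{Z}}(\mathbb{R})$. *)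

theory Defs
  imports "HOL-Analysis.Analysis" "HOL-Algebra.Group"
begin

definition left_inv_total_order :: "('a, 'b) monoid_scheme \<Rightarrow> ('a \<Rightarrow> 'a \<Rightarrow> bool) \<Rightarrow> bool" where
  "left_inv_total_order G lq \<longleftrightarrow>
     (\<forall>a\<in>carrier G. lq a a) \<and>
     (\<forall>a\<in>carrier G. \<forall>b\<in>carrier G. lq a b \<and> lq b a \<longrightarrow> a = b) \<and>
     (\<forall>a\<in>carrier G. \<forall>b\<in>carrier G. \<forall>c\<in>carrier G. lq a b \<and> lq b c \<longrightarrow> lq a c) \<and>
     (\<forall>a\<in>carrier G. \<forall>b\<in>carrier G. lq a b \<or> lq b a) \<and>
     (\<forall>a\<in>carrier G. \<forall>b\<in>carrier G. \<forall>h\<in>carrier G. lq a b \<longrightarrow> lq (h \<otimes>\<^bsub>G\<^esub> a) (h \<otimes>\<^bsub>G\<^esub> b))"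

definition strict_of :: "('a \<Rightarrow> 'a \<Rightarrow> bool) \<Rightarrow> 'a \<Rightarrow> 'a \<Rightarrow> bool" where
  "strict_of lq a b \<longleftrightarrow> lq a b \<and> a \<noteq> b"

definition central_elem :: "('a, 'b) monoid_scheme \<Rightarrow> 'a \<Rightarrow> bool" where
  "central_elem G x \<longleftrightarrow> x \<in> carrier G \<and> (\<forall>g\<in>carrier G. x \<otimes>\<^bsub>G\<^esub> g = g \<otimes>\<^bsub>G\<^esub> x)"

definition dominant :: "('a, 'b) monoid_scheme \<Rightarrow> ('a \<Rightarrow> 'a \<Rightarrow> bool) \<Rightarrow> 'a \<Rightarrow> bool" where
  "dominant G lq x \<longleftrightarrow> x \<in> carrier G \<and>
     (\<forall>a\<in>carrier G. \<forall>b\<in>carrier G. \<exists>n::nat. strict_of lq b (a \<otimes>\<^bsub>G\<^esub> (x [^]\<^bsub>G\<^esub> n)))"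

definition hT :: "('a, 'b) monoid_scheme \<Rightarrow> ('a \<Rightarrow> 'a \<Rightarrow> bool) \<Rightarrow> 'a \<Rightarrow> 'a \<Rightarrow> 'a \<Rightarrow> real" where
  "hT G lq x a b = Inf {real_of_int m | m::int. lq a (b \<otimes>\<^bsub>G\<^esub> (x [^]\<^bsub>G\<^esub> m))}"

definition transl_order :: "('a, 'b) monoid_scheme \<Rightarrow> ('a \<Rightarrow> 'a \<Rightarrow> bool) \<Rightarrow> 'a \<Rightarrow> 'a \<Rightarrow> real" where
  "transl_order G lq x g = lim (\<lambda>n::nat. hT G lq x (g [^]\<^bsub>G\<^esub> n) \<one>\<^bsub>G\<^esub> / real n)"

definition homeo_plus :: "(real \<Rightarrow> real) \<Rightarrow> bool" where
  "homeo_plus f \<longleftrightarrow> (\<exists>g. homeomorphism UNIV UNIV f g) \<and> strict_mono f"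

definition transl_real :: "(real \<Rightarrow> real) \<Rightarrow> real" where
  "transl_real \<psi> = lim (\<lambda>n::nat. (\<psi> ^^ n) 0 / real n)"

definition dyn_realization ::
  "('a, 'b) monoid_scheme \<Rightarrow> ('a \<Rightarrow> 'a \<Rightarrow> bool) \<Rightarrow> ('a \<Rightarrow> real \<Rightarrow> real) \<Rightarrow> ('a \<Rightarrow> real) \<Rightarrow> bool" where
  "dyn_realization G lq \<phi> t \<longleftrightarrow>
     (\<forall>g\<in>carrier G. homeo_plus (\<phi> g)) \<and>
     (\<forall>g\<in>carrier G. \<forall>h\<in>carrier G. \<phi> (g \<otimes>\<^bsub>G\<^esub> h) = \<phi> g \<circ> \<phi> h) \<and>
     inj_on \<phi> (carrier G) \<and>
     inj_on t (carrier G) \<and>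
     (\<forall>g\<in>carrier G. \<forall>h\<in>carrier G. t (g \<otimes>\<^bsub>G\<^esub> h) = \<phi> g (t h)) \<and>
     t \<one>\<^bsub>G\<^esub> = 0 \<and>
     (\<forall>r::real. \<exists>g\<in>carrier G. t g < r) \<and>
     (\<forall>r::real. \<exists>g\<in>carrier G. r < t g) \<and>
     (\<forall>f\<in>carrier G. \<forall>g\<in>carrier G. strict_of lq f g \<longleftrightarrow> \<phi> f 0 < \<phi> g 0)"

definition adapted_to :: "('a \<Rightarrow> real \<Rightarrow> real) \<Rightarrow> 'a \<Rightarrow> bool" where
  "adapted_to \<phi> x \<longleftrightarrow> \<phi> x = (\<lambda>s. s + 1)"

end

theory Submission
  imports Defs
begin

text \<open>
  Since \<open>x\<close> is central and \<open>\<phi> x\<close> is the unit translation, every \<open>\<phi> g\<close> is a monotone lift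
  commuting with \<open>s \<mapsto> s + 1\<close>, so its orbit \<open>n \<mapsto> (\<phi> g ^^ n) 0\<close> is additive up to an error
  of \<open>1\<close> and the translation number exists by the Fekete-type Cauchy argument.
  On the order side, \<open>t (x\<^sup>m) = m\<close> and \<open>t\<close> is an order embedding, so
  \<open>h\<^sub>T (a, e) = \<lceil>t a\<rceil>\<close>; with \<open>t (g\<^sup>n) = (\<phi> g ^^ n) 0\<close> both limits agree, as the
  rounding error is at most \<open>1 / n\<close>.
\<close>

lemma plus_of_int_commute:
  fixes F :: "real \<Rightarrow> real"
  assumes F: "\<And>s. F (s + 1) = F s + 1"
  shows "F (s + of_int k) = F s + of_int k"
proof -
  have nat: "F (s + real n) = F s + real n" for s n
  proof (induction n arbitrary: s)
    case (Suc n)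
    have "F (s + real (Suc n)) = F ((s + 1) + real n)" by (simp add: algebra_simps)
    then show ?case using Suc[of "s + 1"] F by simp
  qed simp
  show ?thesis
  proof (cases "k \<ge> 0")
    case True
    then show ?thesis using nat[of s "nat k"] by simp
  next
    case False
    have "F s = F ((s + of_int k) + real (nat (- k)))" using False by simp
    also have "\<dots> = F (s + of_int k) + real (nat (- k))" by (rule nat)
    finally show ?thesis using False by simp
  qed
qed

lemma funpow_plus_one_commute:
  fixes F :: "real \<Rightarrow> real"
  assumes "\<And>s. F (s + 1) = F s + 1"
  shows "(F ^^ n) (s + 1) = (F ^^ n) s + 1"
  by (induction n arbitrary: s) (simp_all add: assms)

text \<open>Compare \<open>y\<close> with \<open>\<lfloor>y\<rfloor>\<close> and \<open>\<lfloor>y\<rfloor> + 1\<close>, where \<open>F\<close> is a translate of \<open>F 0\<close>.\<close>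

lemma lift_displacement_bound:
  fixes F :: "real \<Rightarrow> real"
  assumes F: "\<And>s. F (s + 1) = F s + 1" and "mono F"
  shows "\<bar>F y - y - F 0\<bar> \<le> 1"
proof -
  let ?k = "\<lfloor>y\<rfloor>"
  have lo: "F (of_int ?k) = F 0 + ?k" using plus_of_int_commute[where F = F, OF F, of 0 ?k] by simp
  have hi: "F (of_int ?k + 1) = F 0 + ?k + 1" using lo F by simp
  have "F (of_int ?k) \<le> F y" "F y \<le> F (of_int ?k + 1)"
    by (auto intro!: monoD[OF \<open>mono F\<close>])
  moreover have "of_int ?k \<le> y" "y < of_int ?k + 1" by linarith+
  ultimately show ?thesis using lo hi unfolding abs_le_iff by linarith
qed

lemma quasi_additive_multiple_bound:
  fixes a :: "nat \<Rightarrow> real"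
  assumes "\<And>m n. \<bar>a (m + n) - a m - a n\<bar> \<le> C" and "k > 0"
  shows "\<bar>a (k * n) - real k * a n\<bar> \<le> real k * C"
  using \<open>k > 0\<close>
proof (induction k rule: nat_induct_non_zero)
  case 1
  show ?case using assms(1)[of 0 0] by simp
next
  case (Suc k)
  then show ?case using assms(1)[of n "k * n"] by (simp add: algebra_simps)
qed

text \<open>Comparing both quotients with \<open>a (m n) / (m n)\<close>.\<close>

lemma quasi_additive_quotient_dist:
  fixes a :: "nat \<Rightarrow> real"
  assumes add: "\<And>m n. \<bar>a (m + n) - a m - a n\<bar> \<le> C" and "m > 0" "n > 0"
  shows "\<bar>a m / m - a n / n\<bar> \<le> C / m + C / n"
proof -
  have pos: "real m > 0" "real n > 0" using assms by auto
  have "\<bar>a (n * m) / (n * m) - a m / m\<bar> = \<bar>a (n * m) - real n * a m\<bar> / (n * m)"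
    using pos by (simp add: field_simps abs_divide)
  also have "\<dots> \<le> real n * C / (n * m)"
    using quasi_additive_multiple_bound[OF add, of n m] pos by (intro divide_right_mono) simp_all
  finally have m: "\<bar>a (n * m) / (n * m) - a m / m\<bar> \<le> C / m" using pos by simp
  have "\<bar>a (n * m) / (n * m) - a n / n\<bar> = \<bar>a (m * n) - real m * a n\<bar> / (n * m)"
    using pos by (simp add: field_simps abs_divide mult.commute)
  also have "\<dots> \<le> real m * C / (n * m)"
    using quasi_additive_multiple_bound[OF add, of m n] pos by (intro divide_right_mono) simp_all
  finally have n: "\<bar>a (n * m) / (n * m) - a n / n\<bar> \<le> C / n" using pos by simp
  from m n show ?thesis unfolding abs_le_iff by linarith
qed

lemma quasi_additive_quotient_convergent:
  fixes a :: "nat \<Rightarrow> real"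
  assumes add: "\<And>m n. \<bar>a (m + n) - a m - a n\<bar> \<le> C"
  shows "convergent (\<lambda>n. a n / n)"
proof -
  have "C \<ge> 0" using add[of 0 0] by simp
  have "Cauchy (\<lambda>n. a n / n)"
  proof (rule metric_CauchyI)
    fix e :: real assume "e > 0"
    obtain M :: nat where M: "real M > 2 * (C + 1) / e" using reals_Archimedean2 by blast
    moreover have "2 * (C + 1) / e > 0" using \<open>C \<ge> 0\<close> \<open>e > 0\<close> by simp
    ultimately have "M > 0" by linarith
    have CM: "2 * C / M < e" using M \<open>M > 0\<close> \<open>e > 0\<close> by (simp add: field_simps)
    show "\<exists>M. \<forall>m\<ge>M. \<forall>n\<ge>M. dist (a m / m) (a n / n) < e"
    proof (intro exI allI impI)
      fix m n assume "m \<ge> M" "n \<ge> M"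
      then have "C / m \<le> C / M" "C / n \<le> C / M"
        using \<open>M > 0\<close> \<open>C \<ge> 0\<close> by (auto intro!: divide_left_mono)
      then show "dist (a m / m) (a n / n) < e"
        using quasi_additive_quotient_dist[OF add, of m n] \<open>m \<ge> M\<close> \<open>n \<ge> M\<close> \<open>M > 0\<close> CM
        by (simp add: dist_real_def)
    qed
  qed
  then show ?thesis by (simp add: Cauchy_convergent_iff)
qed

lemma lift_translation_number_convergent:
  fixes F :: "real \<Rightarrow> real"
  assumes F: "\<And>s. F (s + 1) = F s + 1" and "mono F"
  shows "convergent (\<lambda>n. (F ^^ n) 0 / n)"
proof (rule quasi_additive_quotient_convergent)
  fix m n
  have "mono (F ^^ m)" using \<open>mono F\<close> by (simp add: funpow_mono monoI monoD)
  then show "\<bar>(F ^^ (m + n)) 0 - (F ^^ m) 0 - (F ^^ n) 0\<bar> \<le> 1"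
    using lift_displacement_bound[where F = "F ^^ m", OF funpow_plus_one_commute[where F = F, OF F], of "(F ^^ n) 0"]
    by (simp add: funpow_add)
qed

lemma ceiling_quotient_tendsto:
  fixes a :: "nat \<Rightarrow> real"
  assumes "(\<lambda>n. a n / n) \<longlonglongrightarrow> L"
  shows "(\<lambda>n. of_int \<lceil>a n\<rceil> / n) \<longlonglongrightarrow> L"
proof -
  have "(\<lambda>n. (of_int \<lceil>a n\<rceil> - a n) / n) \<longlonglongrightarrow> 0"
  proof (rule Lim_null_comparison[OF always_eventually lim_1_over_n], rule allI)
    fix n
    have "0 \<le> of_int \<lceil>a n\<rceil> - a n" "of_int \<lceil>a n\<rceil> - a n \<le> 1" by linarith+
    then show "norm ((of_int \<lceil>a n\<rceil> - a n) / n) \<le> 1 / n" by (simp add: divide_right_mono)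
  qed
  from tendsto_add[OF assms this] show ?thesis by (simp add: diff_divide_distrib)
qed

context
  fixes G :: "('a, 'b) monoid_scheme" and lq :: "'a \<Rightarrow> 'a \<Rightarrow> bool"
    and \<phi> :: "'a \<Rightarrow> real \<Rightarrow> real" and t :: "'a \<Rightarrow> real"
  assumes G: "group G" and dyn: "dyn_realization G lq \<phi> t"
begin

interpretation group G by (rule G)

lemma dyn_realization_mult:
  "g \<in> carrier G \<Longrightarrow> h \<in> carrier G \<Longrightarrow> \<phi> (g \<otimes>\<^bsub>G\<^esub> h) = \<phi> g \<circ> \<phi> h"
  using dyn by (simp add: dyn_realization_def)

lemma dyn_realization_strict_mono: "g \<in> carrier G \<Longrightarrow> strict_mono (\<phi> g)"
  using dyn by (simp add: dyn_realization_def homeo_plus_def)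

lemma dyn_realization_one: "\<phi> \<one>\<^bsub>G\<^esub> = id"
proof
  fix s
  have "inj (\<phi> \<one>\<^bsub>G\<^esub>)" using dyn_realization_strict_mono[OF one_closed] strict_mono_imp_inj_on by blast
  moreover have "\<phi> \<one>\<^bsub>G\<^esub> (\<phi> \<one>\<^bsub>G\<^esub> s) = \<phi> \<one>\<^bsub>G\<^esub> s"
    using dyn_realization_mult[OF one_closed one_closed] by (metis comp_apply l_one one_closed)
  ultimately show "\<phi> \<one>\<^bsub>G\<^esub> s = id s" by (simp add: injD)
qed

lemma dyn_realization_nat_pow:
  "g \<in> carrier G \<Longrightarrow> \<phi> (g [^]\<^bsub>G\<^esub> (n::nat)) = \<phi> g ^^ n"
  by (induction n) (simp_all add: dyn_realization_one dyn_realization_mult fun_eq_iff funpow_swap1)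

lemma dyn_realization_inv: "g \<in> carrier G \<Longrightarrow> \<phi> (inv\<^bsub>G\<^esub> g) (\<phi> g s) = s"
  using dyn_realization_mult[of "inv\<^bsub>G\<^esub> g" g] by (simp add: dyn_realization_one fun_eq_iff)

lemma dyn_realization_orbit: "g \<in> carrier G \<Longrightarrow> t g = \<phi> g 0"
  using dyn one_closed unfolding dyn_realization_def by (metis r_one)

lemma dyn_realization_le_iff:
  assumes "left_inv_total_order G lq" "a \<in> carrier G" "b \<in> carrier G"
  shows "lq a b \<longleftrightarrow> t a \<le> t b"
proof -
  have "strict_of lq a b \<longleftrightarrow> t a < t b"
    using dyn assms(2,3) by (simp add: dyn_realization_def dyn_realization_orbit)
  moreover have "t a = t b \<longleftrightarrow> a = b"
    using dyn assms(2,3) by (auto simp: dyn_realization_def dest: inj_onD)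
  moreover have "lq a a" using assms(1,2) by (simp add: left_inv_total_order_def)
  ultimately show ?thesis by (auto simp: strict_of_def)
qed

context
  fixes x :: 'a
  assumes xG: "x \<in> carrier G" and adapted: "adapted_to \<phi> x"
begin

lemma adapted_nat_pow: "\<phi> (x [^]\<^bsub>G\<^esub> (n::nat)) s = s + real n"
proof (induction n arbitrary: s)
  case (Suc n)
  have "\<phi> (x [^]\<^bsub>G\<^esub> Suc n) s = \<phi> (x [^]\<^bsub>G\<^esub> n) (s + 1)"
    using xG adapted by (simp add: dyn_realization_mult adapted_to_def)
  then show ?case using Suc by simp
qed (simp add: dyn_realization_one)

lemma adapted_int_pow: "\<phi> (x [^]\<^bsub>G\<^esub> (m::int)) s = s + of_int m"
proof (cases "m < 0")
  case False
  then obtain n where "m = int n" by (metis nonneg_int_cases not_less)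
  then show ?thesis by (simp only: int_pow_int adapted_nat_pow of_int_of_nat_eq)
next
  case True
  define y where "y = x [^]\<^bsub>G\<^esub> nat (- m)"
  have "x [^]\<^bsub>G\<^esub> m = inv\<^bsub>G\<^esub> y" unfolding int_pow_def2 y_def by (simp only: True if_True)
  moreover have "\<phi> (inv\<^bsub>G\<^esub> y) (\<phi> y (s + of_int m)) = s + of_int m"
    using xG by (intro dyn_realization_inv) (simp add: y_def)
  moreover have "\<phi> y (s + of_int m) = s + of_int m + real (nat (- m))"
    by (simp only: y_def adapted_nat_pow)
  ultimately show ?thesis using True by simp
qed

lemma adapted_hT_one:
  assumes "left_inv_total_order G lq" "a \<in> carrier G"
  shows "hT G lq x a \<one>\<^bsub>G\<^esub> = of_int \<lceil>t a\<rceil>"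
proof -
  have "lq a (\<one>\<^bsub>G\<^esub> \<otimes>\<^bsub>G\<^esub> x [^]\<^bsub>G\<^esub> m) \<longleftrightarrow> t a \<le> of_int m" for m :: int
    using dyn_realization_le_iff[OF assms] xG
    by (simp add: dyn_realization_orbit adapted_int_pow)
  then have "hT G lq x a \<one>\<^bsub>G\<^esub> = Inf {of_int m | m::int. t a \<le> of_int m}"
    by (simp add: hT_def)
  also have "\<dots> = of_int \<lceil>t a\<rceil>"
    by (rule cInf_eq_minimum) (auto, linarith)
  finally show ?thesis .
qed

lemma central_adapted_plus_one_commute:
  assumes "central_elem G x" "g \<in> carrier G"
  shows "\<phi> g (s + 1) = \<phi> g s + 1"
proof -
  have "\<phi> (g \<otimes>\<^bsub>G\<^esub> x) s = \<phi> (x \<otimes>\<^bsub>G\<^esub> g) s" using assms by (simp add: central_elem_def)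
  then show ?thesis using assms(2) xG adapted by (simp add: dyn_realization_mult adapted_to_def)
qed

end

end

theorem lemma4p11:
  fixes G :: "('a, 'b) monoid_scheme" and lq :: "'a \<Rightarrow> 'a \<Rightarrow> bool"
    and x :: 'a and \<phi> :: "'a \<Rightarrow> real \<Rightarrow> real" and t :: "'a \<Rightarrow> real"
  assumes "group G" and "countable (carrier G)"
    and "left_inv_total_order G lq"
    and "central_elem G x" and "dominant G lq x"
    and "dyn_realization G lq \<phi> t" and "adapted_to \<phi> x"
  shows "\<forall>g\<in>carrier G. transl_order G lq x g = transl_real (\<phi> g)"
proof
  interpret group G by fact
  have xG: "x \<in> carrier G" using \<open>central_elem G x\<close> by (simp add: central_elem_def)
  fix g assume gG: "g \<in> carrier G"
  have "mono (\<phi> g)"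
    using dyn_realization_strict_mono[OF assms(1,6) gG] by (rule strict_mono_mono)
  then obtain L where L: "(\<lambda>n. (\<phi> g ^^ n) 0 / n) \<longlonglongrightarrow> L"
    using lift_translation_number_convergent central_adapted_plus_one_commute[OF assms(1,6) xG assms(7,4) gG]
    by (auto simp: convergent_def)
  have "hT G lq x (g [^]\<^bsub>G\<^esub> n) \<one>\<^bsub>G\<^esub> = of_int \<lceil>(\<phi> g ^^ n) 0\<rceil>" for n :: nat
    using adapted_hT_one[OF assms(1,6) xG assms(7,3)] dyn_realization_orbit[OF assms(1,6)]
      dyn_realization_nat_pow[OF assms(1,6) gG] gG by simp
  then have "transl_order G lq x g = L"
    using ceiling_quotient_tendsto[OF L] by (simp add: transl_order_def limI)
  moreover have "transl_real (\<phi> g) = L" using L by (simp add: transl_real_def limI)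
  ultimately show "transl_order G lq x g = transl_real (\<phi> g)" by simp
qed

end
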